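(* Let $\mathbf{k}$ be a field, $p\ge3$ an integer, $S=\mathbf{k}[e_1,\dots,e_{2p}]$ standard graded, and let $I$ be the ideal generated by the $3\times3$ minors of $$\begin{pmatrix} 1 & e_1 & 0 & e_2 & 0 & \cdots & e_{p-1} & 0\\ e_p & e_{p+1} & e_1 & e_{p+2} & e_2 & \cdots & e_{2p-1} & e_{p-1}\\ e_{2p} & 0 & e_{p+1} & 0 & e_{p+2} & \cdots & 0 & e_{2p-1}\end{pmatrix}.$$ Let $I'=\langle\mathrm{in}(f):f\in I\rangle$, where $\mathrm{in}(f)$ is the lowest-degree homogeneous component of $f\neq0$. Then $$I'=\mathcal{I}_2\begin{pmatrix} e_1 & e_2 & \cdots & e_{p-1}\\ e_{p+1} & e_{p+2} & \cdots & e_{2p-1}\end{pmatrix}+\langle e_{p+1},e_{p+2},\dots,e_{2p-1}\rangle^2.$$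
   Context: $\mathcal{I}_2(\cdot)$ denotes the ideal generated by the $2\times 2$ minors of a matrix. *)

theory Defs
  imports Main "HOL-Library.Poly_Mapping"
begin

(* Multivariate polynomials over 'k in variables indexed by nat:
  a monomial is a finitely supported exponent vector nat =>0 nat,
  a polynomial is a finitely supported map from monomials to coefficients. *)

type_synonym 'k mpoly = "(nat \<Rightarrow>\<^sub>0 nat) \<Rightarrow>\<^sub>0 'k"

definition Var :: "nat \<Rightarrow> 'k::comm_ring_1 mpoly" where
  "Var i = Poly_Mapping.single (Poly_Mapping.single i 1) 1"

definition polys_in :: "nat set \<Rightarrow> 'k::comm_ring_1 mpoly set" where
  "polys_in V = {f :: 'k mpoly. \<forall>m\<in>Poly_Mapping.keys f. Poly_Mapping.keys m \<subseteq> V}"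

definition is_ideal_in :: "nat set \<Rightarrow> 'k::comm_ring_1 mpoly set \<Rightarrow> bool" where
  "is_ideal_in V J \<longleftrightarrow> J \<subseteq> polys_in V \<and> 0 \<in> J \<and>
     (\<forall>a\<in>J. \<forall>b\<in>J. a + b \<in> J) \<and> (\<forall>r\<in>polys_in V. \<forall>a\<in>J. r * a \<in> J)"

definition ideal_gen :: "nat set \<Rightarrow> 'k::comm_ring_1 mpoly set \<Rightarrow> 'k mpoly set" where
  "ideal_gen V G = \<Inter>{J. is_ideal_in V J \<and> G \<subseteq> J}"

definition ideal_sum :: "nat set \<Rightarrow> 'k::comm_ring_1 mpoly set \<Rightarrow> 'k mpoly set \<Rightarrow> 'k mpoly set" where
  "ideal_sum V I J = ideal_gen V (I \<union> J)"

definition ideal_mult :: "nat set \<Rightarrow> 'k::comm_ring_1 mpoly set \<Rightarrow> 'k mpoly set \<Rightarrow> 'k mpoly set" where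
  "ideal_mult V I J = ideal_gen V {a * b | a b. a \<in> I \<and> b \<in> J}"

definition mdeg :: "(nat \<Rightarrow>\<^sub>0 nat) \<Rightarrow> nat" where
  "mdeg m = (\<Sum>i\<in>Poly_Mapping.keys m. Poly_Mapping.lookup m i)"

definition low_deg :: "'k::comm_ring_1 mpoly \<Rightarrow> nat" where
  "low_deg f = Min (mdeg ` Poly_Mapping.keys f)"

definition init_form :: "'k::comm_ring_1 mpoly \<Rightarrow> 'k mpoly" where
  "init_form f = (\<Sum>m\<in>{m\<in>Poly_Mapping.keys f. mdeg m = low_deg f}. Poly_Mapping.single m (Poly_Mapping.lookup f m))"

definition initial_ideal :: "nat set \<Rightarrow> 'k::comm_ring_1 mpoly set \<Rightarrow> 'k mpoly set" where
  "initial_ideal V I = ideal_gen V {init_form f | f. f \<in> I \<and> f \<noteq> 0}"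

(* Minors of matrices given as functions row => column => entry (rows/cols from 0). *)
definition det3 :: "(nat \<Rightarrow> nat \<Rightarrow> 'a::comm_ring_1) \<Rightarrow> nat \<Rightarrow> nat \<Rightarrow> nat \<Rightarrow> 'a" where
  "det3 M a b c =
     M 0 a * (M 1 b * M 2 c - M 1 c * M 2 b)
   - M 0 b * (M 1 a * M 2 c - M 1 c * M 2 a)
   + M 0 c * (M 1 a * M 2 b - M 1 b * M 2 a)"

definition minors3 :: "(nat \<Rightarrow> nat \<Rightarrow> 'a::comm_ring_1) \<Rightarrow> nat \<Rightarrow> 'a set" where
  "minors3 M n = {det3 M a b c | a b c. a < b \<and> b < c \<and> c < n}"

definition minors2 :: "(nat \<Rightarrow> nat \<Rightarrow> 'a::comm_ring_1) \<Rightarrow> nat \<Rightarrow> 'a set" where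
  "minors2 M n = {M 0 a * M 1 b - M 0 b * M 1 a | a b. a < b \<and> b < n}"

(* The 3 x (2p-1) matrix of the statement (variable e_i is Var i, i = 1..2p).
  Column 0 is (1, e_p, e_2p); for j = 1..p-1 column 2j-1 is (e_j, e_{p+j}, 0)
  and column 2j is (0, e_j, e_{p+j}). *)
definition matA :: "nat \<Rightarrow> nat \<Rightarrow> nat \<Rightarrow> 'k::comm_ring_1 mpoly" where
  "matA p i j =
    (if j = 0 then (if i = 0 then 1 else if i = 1 then Var p else Var (2*p))
     else if odd j then
       (if i = 0 then Var ((j+1) div 2) else if i = 1 then Var (p + (j+1) div 2) else 0)
     else
       (if i = 0 then 0 else if i = 1 then Var (j div 2) else Var (p + j div 2)))"

definition matB :: "nat \<Rightarrow> nat \<Rightarrow> nat \<Rightarrow> 'k::comm_ring_1 mpoly" where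
  "matB p i j = (if i = 0 then Var (j+1) else Var (p + j + 1))"

end

theory Submission
  imports Defs
begin

(* Write x_k = e_k and y_k = e_(p+k) for 0 < k < p, a = e_p, b = e_(2p), and substitute
  x_k -> x_k T, y_k -> z x_k T, a -> a T, b -> b T with two new variables z and T, so that T records
  the degree. Every column of the matrix becomes a multiple of (1, aT, bT), (1, z, 0) or (0, 1, z);
  hence every 3x3 minor, and so all of I, is mapped into the principal ideal generated by
  h = z^2 - a z T + b T. The part of lowest T-degree of a multiple of h is divisible by z^2, and the
  image of an initial form in(f) is the part of lowest T-degree of the image of f. So every monomial
  of the image of in(f) is divisible by z^2, i.e. comes from a monomial containing two y's. Modulo
  the right-hand ideal J such monomials vanish, while the minors x_k y_l - x_l y_k identify any two
  monomials with at most one y and the same image; therefore in(f) lies in J. Conversely the 2x2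
  minors are themselves homogeneous 3x3 minors of the matrix, and y_j y_k is the initial form of the
  minor on the columns 0, 2j-1, 2k. *)

lemma poly_mapping_sum_single:
  "(f :: 'a \<Rightarrow>\<^sub>0 'b::comm_monoid_add) = (\<Sum>m\<in>Poly_Mapping.keys f. Poly_Mapping.single m (Poly_Mapping.lookup f m))"
  by (rule poly_mapping_eqI) (simp add: lookup_sum lookup_single when_def in_keys_iff sum.If_cases)

lemma lookup_sum_single:
  "Poly_Mapping.lookup (\<Sum>m\<in>S. Poly_Mapping.single (F m) (c m)) u = (\<Sum>m\<in>S. if F m = u then c m else (0::'b::comm_monoid_add))"
  by (simp add: lookup_sum lookup_single when_def)

lemma single_sum: "(\<Sum>i\<in>S. Poly_Mapping.single k (c i)) = Poly_Mapping.single k (\<Sum>i\<in>S. c i :: 'b::comm_monoid_add)"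
  by (rule poly_mapping_eqI) (simp add: lookup_sum lookup_single when_def)

lemma keys_add_nat: "Poly_Mapping.keys (m + n :: 'a \<Rightarrow>\<^sub>0 nat) = Poly_Mapping.keys m \<union> Poly_Mapping.keys n"
  by (auto simp: in_keys_iff lookup_add)

lemma mdeg_add: "mdeg (m + n) = mdeg m + mdeg n"
proof -
  have mdeg_eq: "mdeg k = (\<Sum>i\<in>Poly_Mapping.keys m \<union> Poly_Mapping.keys n. Poly_Mapping.lookup k i)"
    if "Poly_Mapping.keys k \<subseteq> Poly_Mapping.keys m \<union> Poly_Mapping.keys n" for k
    unfolding mdeg_def using that by (intro sum.mono_neutral_left) (auto simp: in_keys_iff)
  show ?thesis
    by (subst (1 2 3) mdeg_eq) (auto simp: keys_add_nat lookup_add sum.distrib)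
qed

lemma mdeg_single [simp]: "mdeg (Poly_Mapping.single i k) = k"
  unfolding mdeg_def by simp

lemma Var_mult: "Var i * Var j = Poly_Mapping.single (Poly_Mapping.single i 1 + Poly_Mapping.single j 1) 1"
  unfolding Var_def by (simp add: mult_single)

lemma single_one_neq_zero: "Poly_Mapping.single m (1::'a::zero_neq_one) \<noteq> 0"
  by (metis lookup_single_eq lookup_zero one_neq_zero)

lemma lookup_single_mult:
  "Poly_Mapping.lookup (Poly_Mapping.single k c * (X :: 'k::comm_ring_1 mpoly)) (k + n) = c * Poly_Mapping.lookup X n"
proof -
  have "Poly_Mapping.single k c * X =
      (\<Sum>n'\<in>Poly_Mapping.keys X. Poly_Mapping.single (k + n') (c * Poly_Mapping.lookup X n'))"
    by (subst (1) poly_mapping_sum_single[of X]) (simp add: sum_distrib_left mult_single)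
  then show ?thesis
    by (simp add: lookup_sum_single in_keys_iff)
qed

lemma keys_single_mult:
  "u \<in> Poly_Mapping.keys (Poly_Mapping.single k c * (X :: 'k::comm_ring_1 mpoly)) \<Longrightarrow> \<exists>n. u = k + n"
  using keys_mult[of "Poly_Mapping.single k c" X] by (auto split: if_splits)

lemma monomial_split_var:
  fixes m :: "'a \<Rightarrow>\<^sub>0 nat"
  assumes "finite A" "0 < (\<Sum>i\<in>A. Poly_Mapping.lookup m i)"
  obtains i w where "i \<in> A" "m = w + Poly_Mapping.single i 1"
proof -
  have "(\<Sum>i\<in>A. Poly_Mapping.lookup m i) \<noteq> 0"
    using assms(2) by simp
  then obtain i where i: "i \<in> A" "Poly_Mapping.lookup m i \<noteq> 0"
    by (rule sum.not_neutral_contains_not_neutral)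
  have "m = (m - Poly_Mapping.single i 1) + Poly_Mapping.single i 1"
    using i(2) by (intro poly_mapping_eqI) (auto simp: lookup_add lookup_minus lookup_single when_def)
  then show thesis
    using that i(1) by blast
qed

lemma sum_lookup_add_single:
  fixes w :: "'a \<Rightarrow>\<^sub>0 nat"
  shows "finite A \<Longrightarrow> i \<in> A \<Longrightarrow>
    (\<Sum>j\<in>A. Poly_Mapping.lookup (w + Poly_Mapping.single i 1) j) = (\<Sum>j\<in>A. Poly_Mapping.lookup w j) + 1"
  by (simp add: lookup_add sum.distrib lookup_single when_def)

lemma polys_in_zero [simp]: "0 \<in> polys_in V"
  unfolding polys_in_def by simp

lemma polys_in_one [simp]: "1 \<in> polys_in V"
  unfolding polys_in_def by simp

lemma polys_in_add: "f \<in> polys_in V \<Longrightarrow> g \<in> polys_in V \<Longrightarrow> f + g \<in> polys_in V"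
  unfolding polys_in_def using keys_add[of f g] by blast

lemma polys_in_mult: "f \<in> polys_in V \<Longrightarrow> g \<in> polys_in V \<Longrightarrow> f * g \<in> polys_in V"
  unfolding polys_in_def using keys_mult[of f g] by (fastforce simp: keys_add_nat)

lemma polys_in_uminus: "f \<in> polys_in V \<Longrightarrow> - f \<in> polys_in V"
  unfolding polys_in_def by simp

lemma polys_in_diff: "f \<in> polys_in V \<Longrightarrow> g \<in> polys_in V \<Longrightarrow> f - g \<in> polys_in V"
  by (metis diff_conv_add_uminus polys_in_add polys_in_uminus)

lemma polys_in_single: "Poly_Mapping.keys m \<subseteq> V \<Longrightarrow> Poly_Mapping.single m c \<in> polys_in V"
  unfolding polys_in_def by auto

lemma polys_in_const: "Poly_Mapping.single 0 c \<in> polys_in V"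
  by (simp add: polys_in_single)

lemma polys_in_Var: "i \<in> V \<Longrightarrow> Var i \<in> polys_in V"
  unfolding Var_def by (simp add: polys_in_single)

lemma is_ideal_in_polys_in: "is_ideal_in V (polys_in V)"
  unfolding is_ideal_in_def by (simp add: polys_in_add polys_in_mult)

lemma ideal_gen_is_ideal:
  assumes "G \<subseteq> polys_in V"
  shows "is_ideal_in V (ideal_gen V G)"
proof -
  have "polys_in V \<in> {J. is_ideal_in V J \<and> G \<subseteq> J}"
    using assms is_ideal_in_polys_in by blast
  then have "ideal_gen V G \<subseteq> polys_in V"
    unfolding ideal_gen_def by blast
  then show ?thesis
    unfolding is_ideal_in_def[of V "ideal_gen V G"] unfolding ideal_gen_def is_ideal_in_def
    by blast
qed

lemma ideal_gen_subset: "G \<subseteq> ideal_gen V G"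
  unfolding ideal_gen_def by blast

lemma ideal_gen_least: "is_ideal_in V J \<Longrightarrow> G \<subseteq> J \<Longrightarrow> ideal_gen V G \<subseteq> J"
  unfolding ideal_gen_def by blast

lemma zero_mem_ideal_gen: "0 \<in> ideal_gen V G"
  unfolding ideal_gen_def is_ideal_in_def by auto

context
  fixes V :: "nat set" and J :: "'k::comm_ring_1 mpoly set"
  assumes ideal: "is_ideal_in V J"
begin

lemma ideal_subset_polys_in: "J \<subseteq> polys_in V"
  using ideal by (simp add: is_ideal_in_def)

lemma zero_mem_ideal: "0 \<in> J"
  using ideal by (simp add: is_ideal_in_def)

lemma add_mem_ideal: "a \<in> J \<Longrightarrow> b \<in> J \<Longrightarrow> a + b \<in> J"
  using ideal by (simp add: is_ideal_in_def)

lemma mult_mem_ideal: "r \<in> polys_in V \<Longrightarrow> a \<in> J \<Longrightarrow> r * a \<in> J"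
  using ideal by (simp add: is_ideal_in_def)

lemma diff_mem_ideal:
  assumes "a \<in> J" "b \<in> J"
  shows "a - b \<in> J"
proof -
  have "- 1 \<in> polys_in V"
    using polys_in_uminus[OF polys_in_const[where c = 1]] by simp
  then have "- 1 * b \<in> J"
    using assms(2) by (rule mult_mem_ideal)
  then have "a + - 1 * b \<in> J"
    by (rule add_mem_ideal[OF assms(1)])
  then show ?thesis
    by simp
qed

lemma sum_mem_ideal: "(\<And>i. i \<in> S \<Longrightarrow> F i \<in> J) \<Longrightarrow> sum F S \<in> J"
  by (induction S rule: infinite_finite_induct) (simp_all add: zero_mem_ideal add_mem_ideal)

lemma const_mult_mem_ideal: "a \<in> J \<Longrightarrow> Poly_Mapping.single 0 c * a \<in> J"
  by (rule mult_mem_ideal[OF polys_in_const])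

lemma colon_is_ideal: "is_ideal_in V {b \<in> polys_in V. \<forall>a\<in>A. a * b \<in> J}"
  unfolding is_ideal_in_def
proof (intro conjI ballI)
  fix x y :: "'k mpoly"
  assume x: "x \<in> {b \<in> polys_in V. \<forall>a\<in>A. a * b \<in> J}" and y: "y \<in> {b \<in> polys_in V. \<forall>a\<in>A. a * b \<in> J}"
  have "a * (x + y) \<in> J" if "a \<in> A" for a
    using x y that add_mem_ideal by (simp add: distrib_left)
  then show "x + y \<in> {b \<in> polys_in V. \<forall>a\<in>A. a * b \<in> J}"
    using x y by (simp add: polys_in_add)
next
  fix r x :: "'k mpoly"
  assume r: "r \<in> polys_in V" and x: "x \<in> {b \<in> polys_in V. \<forall>a\<in>A. a * b \<in> J}"
  have "a * (r * x) \<in> J" if "a \<in> A" for a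
  proof -
    have "r * (a * x) \<in> J"
      using mult_mem_ideal[OF r] x that by blast
    then show ?thesis
      by (subst mult.left_commute)
  qed
  then show "r * x \<in> {b \<in> polys_in V. \<forall>a\<in>A. a * b \<in> J}"
    using r x by (simp add: polys_in_mult)
qed (simp_all add: zero_mem_ideal)

lemma ideal_mult_ideal_gen_subset:
  assumes "Y \<subseteq> polys_in V" "Z \<subseteq> polys_in V" "\<And>y z. y \<in> Y \<Longrightarrow> z \<in> Z \<Longrightarrow> y * z \<in> J"
  shows "ideal_mult V (ideal_gen V Y) (ideal_gen V Z) \<subseteq> J"
proof -
  have "Z \<subseteq> {b \<in> polys_in V. \<forall>a\<in>Y. a * b \<in> J}"
    using assms(2,3) by blast
  then have gen_Z: "ideal_gen V Z \<subseteq> {b \<in> polys_in V. \<forall>a\<in>Y. a * b \<in> J}"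
    by (rule ideal_gen_least[OF colon_is_ideal])
  have "b * y \<in> J" if "y \<in> Y" "b \<in> ideal_gen V Z" for y b
  proof -
    have "y * b \<in> J"
      using gen_Z that by blast
    then show ?thesis
      by (metis mult.commute)
  qed
  then have "Y \<subseteq> {a \<in> polys_in V. \<forall>b\<in>ideal_gen V Z. b * a \<in> J}"
    using assms(1) by blast
  then have gen_Y: "ideal_gen V Y \<subseteq> {a \<in> polys_in V. \<forall>b\<in>ideal_gen V Z. b * a \<in> J}"
    by (rule ideal_gen_least[OF colon_is_ideal])
  have products: "a * b \<in> J" if "a \<in> ideal_gen V Y" "b \<in> ideal_gen V Z" for a b
  proof -
    have "b * a \<in> J"
      using gen_Y that by blast
    then show ?thesis
      by (metis mult.commute)
  qed
  show ?thesis
    unfolding ideal_mult_def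
  proof (rule ideal_gen_least[OF ideal], rule subsetI)
    fix c assume "c \<in> {a * b |a b. a \<in> ideal_gen V Y \<and> b \<in> ideal_gen V Z}"
    then show "c \<in> J"
      using products by blast
  qed
qed

end

lemma ideal_sum_is_ideal: "I \<subseteq> polys_in V \<Longrightarrow> J \<subseteq> polys_in V \<Longrightarrow> is_ideal_in V (ideal_sum V I J)"
  unfolding ideal_sum_def by (simp add: ideal_gen_is_ideal)

lemma subset_ideal_sum: "I \<subseteq> ideal_sum V I J" "J \<subseteq> ideal_sum V I J"
  unfolding ideal_sum_def using ideal_gen_subset[of "I \<union> J" V] by simp_all

lemma ideal_mult_is_ideal:
  "I \<subseteq> polys_in V \<Longrightarrow> J \<subseteq> polys_in V \<Longrightarrow> is_ideal_in V (ideal_mult V I J)"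
  unfolding ideal_mult_def by (rule ideal_gen_is_ideal) (auto intro!: polys_in_mult)

lemma mult_mem_ideal_mult: "a \<in> I \<Longrightarrow> b \<in> J \<Longrightarrow> a * b \<in> ideal_mult V I J"
  unfolding ideal_mult_def by (rule subsetD[OF ideal_gen_subset]) blast

lemma det3_polys_in:
  "(\<And>i j. j \<in> {a, b, c} \<Longrightarrow> M i j \<in> polys_in V) \<Longrightarrow> det3 M a b c \<in> polys_in V"
  unfolding det3_def by (intro polys_in_add polys_in_diff polys_in_mult) auto

definition homogeneous :: "nat \<Rightarrow> 'k::comm_ring_1 mpoly \<Rightarrow> bool" where
  "homogeneous d f \<longleftrightarrow> (\<forall>m\<in>Poly_Mapping.keys f. mdeg m = d)"

lemma homogeneous_Var: "homogeneous 1 (Var i)"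
  unfolding homogeneous_def Var_def by simp

lemma homogeneous_mult: "homogeneous d f \<Longrightarrow> homogeneous e g \<Longrightarrow> homogeneous (d + e) (f * g)"
  unfolding homogeneous_def using keys_mult[of f g] by (auto simp: mdeg_add)

lemma homogeneous_Var_mult_Var: "homogeneous 2 (Var i * Var j)"
  using homogeneous_mult[OF homogeneous_Var homogeneous_Var] by (simp add: numeral_2_eq_2)

lemma homogeneous_diff: "homogeneous d f \<Longrightarrow> homogeneous d g \<Longrightarrow> homogeneous d (f - g)"
  unfolding homogeneous_def using keys_diff[of f g] by blast

lemma lookup_init_form:
  "Poly_Mapping.lookup (init_form f) m =
     (if m \<in> Poly_Mapping.keys f \<and> mdeg m = low_deg f then Poly_Mapping.lookup f m else 0)"
  unfolding init_form_def lookup_sum_single by (simp add: sum.delta')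

lemma keys_init_form_subset: "Poly_Mapping.keys (init_form f) \<subseteq> Poly_Mapping.keys f"
  by (auto simp: in_keys_iff lookup_init_form split: if_splits)

lemma init_form_polys_in: "f \<in> polys_in V \<Longrightarrow> init_form f \<in> polys_in V"
  unfolding polys_in_def using keys_init_form_subset by blast

lemma low_deg_le: "m \<in> Poly_Mapping.keys f \<Longrightarrow> low_deg f \<le> mdeg m"
  unfolding low_deg_def by simp

lemma init_form_add_higher:
  assumes "P \<noteq> 0" and "homogeneous t P"
    and Q: "\<forall>m\<in>Poly_Mapping.keys Q. t < mdeg m"
  shows "init_form (P + Q) = P"
proof -
  have P: "\<forall>m\<in>Poly_Mapping.keys P. mdeg m = t"
    using \<open>homogeneous t P\<close> unfolding homogeneous_def .
  have disjoint: "Poly_Mapping.lookup Q m = 0" if "m \<in> Poly_Mapping.keys P" for m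
    using P Q that by (metis in_keys_iff less_irrefl)
  then have keys_P: "Poly_Mapping.keys P \<subseteq> Poly_Mapping.keys (P + Q)"
    by (auto simp: in_keys_iff lookup_add)
  obtain m0 where "m0 \<in> Poly_Mapping.keys P"
    using \<open>P \<noteq> 0\<close> by (metis keys_eq_empty ex_in_conv)
  then have "low_deg (P + Q) = t"
    unfolding low_deg_def using keys_P keys_add[of P Q] P Q
    by (intro Min_eqI) fastforce+
  show ?thesis
  proof (rule poly_mapping_eqI)
    fix m
    show "Poly_Mapping.lookup (init_form (P + Q)) m = Poly_Mapping.lookup P m"
    proof (cases "m \<in> Poly_Mapping.keys P")
      case True
      then show ?thesis
        using keys_P P disjoint \<open>low_deg (P + Q) = t\<close> by (auto simp: lookup_init_form lookup_add)
    next
      case False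
      then have "m \<notin> Poly_Mapping.keys (P + Q) \<or> t < mdeg m"
        using keys_add[of P Q] Q by blast
      then show ?thesis
        using False \<open>low_deg (P + Q) = t\<close> by (auto simp: lookup_init_form in_keys_iff)
    qed
  qed
qed

lemma init_form_homogeneous:
  assumes "homogeneous t P"
  shows "init_form P = P"
proof (cases "P = 0")
  case True
  then show ?thesis by (simp add: init_form_def)
next
  case False
  then show ?thesis using init_form_add_higher[OF False assms, of 0] by simp
qed

lemma init_form_mem_initial_ideal: "f \<in> I \<Longrightarrow> init_form f \<in> initial_ideal V I"
  unfolding initial_ideal_def
  using ideal_gen_subset zero_mem_ideal_gen by (cases "f = 0") (fastforce simp: init_form_def)+

lemma initial_ideal_is_ideal: "I \<subseteq> polys_in V \<Longrightarrow> is_ideal_in V (initial_ideal V I)"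
  unfolding initial_ideal_def by (rule ideal_gen_is_ideal) (blast intro: init_form_polys_in)

section \<open>Monomial substitutions\<close>

definition mono_map :: "((nat \<Rightarrow>\<^sub>0 nat) \<Rightarrow> (nat \<Rightarrow>\<^sub>0 nat)) \<Rightarrow> 'k::comm_ring_1 mpoly \<Rightarrow> 'k mpoly" where
  "mono_map \<mu> f = (\<Sum>m\<in>Poly_Mapping.keys f. Poly_Mapping.single (\<mu> m) (Poly_Mapping.lookup f m))"

lemma mono_map_superset:
  assumes "finite K" "Poly_Mapping.keys f \<subseteq> K"
  shows "mono_map \<mu> f = (\<Sum>m\<in>K. Poly_Mapping.single (\<mu> m) (Poly_Mapping.lookup f m))"
  unfolding mono_map_def using assms by (intro sum.mono_neutral_left) (auto simp: in_keys_iff)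

lemma lookup_mono_map:
  "Poly_Mapping.lookup (mono_map \<mu> f) u = (\<Sum>m\<in>Poly_Mapping.keys f. if \<mu> m = u then Poly_Mapping.lookup f m else 0)"
  unfolding mono_map_def by (rule lookup_sum_single)

lemma keys_mono_map: "u \<in> Poly_Mapping.keys (mono_map \<mu> f) \<Longrightarrow> \<exists>m\<in>Poly_Mapping.keys f. \<mu> m = u"
  by (rule ccontr) (simp add: in_keys_iff lookup_mono_map)

lemma mono_map_add: "mono_map \<mu> (f + g) = mono_map \<mu> f + mono_map \<mu> g"
proof -
  let ?K = "Poly_Mapping.keys f \<union> Poly_Mapping.keys g"
  show ?thesis
    using keys_add[of f g]
    by (subst (1 2 3) mono_map_superset[of ?K]) (auto simp: lookup_add single_add sum.distrib)
qed

lemma mono_map_single [simp]: "mono_map \<mu> (Poly_Mapping.single m c) = Poly_Mapping.single (\<mu> m) c"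
  unfolding mono_map_def by (cases "c = 0") auto

lemma mono_map_zero [simp]: "mono_map \<mu> 0 = 0"
  unfolding mono_map_def by simp

lemma mono_map_sum: "mono_map \<mu> (sum F S) = (\<Sum>i\<in>S. mono_map \<mu> (F i))"
  by (induction S rule: infinite_finite_induct) (simp_all add: mono_map_add)

lemma mono_map_uminus: "mono_map \<mu> (- f) = - mono_map \<mu> f"
  unfolding mono_map_def by (simp add: single_uminus sum_negf)

lemma mono_map_diff: "mono_map \<mu> (f - g) = mono_map \<mu> f - mono_map \<mu> g"
  by (simp add: diff_conv_add_uminus mono_map_add mono_map_uminus del: add_uminus_conv_diff)

context
  fixes \<mu> :: "(nat \<Rightarrow>\<^sub>0 nat) \<Rightarrow> (nat \<Rightarrow>\<^sub>0 nat)"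
  assumes additive: "\<And>m n. \<mu> (m + n) = \<mu> m + \<mu> n"
begin

lemma mono_map_mult: "mono_map \<mu> (f * g) = mono_map \<mu> f * mono_map \<mu> g"
proof -
  let ?F = "Poly_Mapping.keys f" and ?G = "Poly_Mapping.keys g"
  have "f * g = (\<Sum>m\<in>?F. Poly_Mapping.single m (Poly_Mapping.lookup f m)) *
                (\<Sum>n\<in>?G. Poly_Mapping.single n (Poly_Mapping.lookup g n))"
    by (subst (1) poly_mapping_sum_single[of f], subst (1) poly_mapping_sum_single[of g]) (rule refl)
  also have "\<dots> = (\<Sum>m\<in>?F. \<Sum>n\<in>?G. Poly_Mapping.single (m + n) (Poly_Mapping.lookup f m * Poly_Mapping.lookup g n))"
    by (simp add: sum_product mult_single)
  finally show ?thesis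
    unfolding mono_map_def[of \<mu> f] mono_map_def[of \<mu> g]
    by (simp add: mono_map_sum additive sum_product mult_single)
qed

lemma mono_map_one: "mono_map \<mu> 1 = 1"
proof -
  have "\<mu> 0 = 0"
    using additive[of 0 0] by simp
  then show ?thesis
    using mono_map_single[of \<mu> 0 1] by simp
qed

lemma mono_map_det3: "mono_map \<mu> (det3 M a b c) = det3 (\<lambda>i j. mono_map \<mu> (M i j)) a b c"
  unfolding det3_def by (simp add: mono_map_add mono_map_diff mono_map_mult)

lemma mono_map_dvd_is_ideal:
  fixes q :: "'k::comm_ring_1 mpoly"
  shows "is_ideal_in V {f \<in> polys_in V. q dvd mono_map \<mu> f}"
  unfolding is_ideal_in_def
proof (intro conjI ballI)
  fix f g :: "'k mpoly"
  assume "f \<in> {f \<in> polys_in V. q dvd mono_map \<mu> f}" "g \<in> {f \<in> polys_in V. q dvd mono_map \<mu> f}"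
  then show "f + g \<in> {f \<in> polys_in V. q dvd mono_map \<mu> f}"
    by (simp add: mono_map_add polys_in_add)
next
  fix r f :: "'k mpoly"
  assume "r \<in> polys_in V" "f \<in> {f \<in> polys_in V. q dvd mono_map \<mu> f}"
  then show "r * f \<in> {f \<in> polys_in V. q dvd mono_map \<mu> f}"
    by (simp add: mono_map_mult polys_in_mult)
qed simp_all

end

lemma fibre_sum_eq_lookup_mono_map:
  "(\<Sum>m\<in>{m \<in> Poly_Mapping.keys f. \<mu> m = u}. Poly_Mapping.lookup f m) = Poly_Mapping.lookup (mono_map \<mu> f) u"
  by (simp add: lookup_mono_map sum.inter_filter)

(* Subtract from each monomial a fixed representative of its fibre; what is left is a combination
  of the representatives with the fibre sums as coefficients. *)
lemma sum_single_mem_ideal_if_fibres_congruent: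
  fixes c :: "(nat \<Rightarrow>\<^sub>0 nat) \<Rightarrow> 'k::comm_ring_1"
  assumes J: "is_ideal_in V J" and "finite K"
    and congruent: "\<And>m m'. m \<in> K \<Longrightarrow> m' \<in> K \<Longrightarrow> \<mu> m = \<mu> m' \<Longrightarrow>
      Poly_Mapping.single m 1 - Poly_Mapping.single m' 1 \<in> J"
    and fibre_sums: "\<And>u. (\<Sum>m\<in>{m \<in> K. \<mu> m = u}. c m) = 0"
  shows "(\<Sum>m\<in>K. Poly_Mapping.single m (c m)) \<in> J"
proof -
  define rep where "rep u = (SOME m. m \<in> K \<and> \<mu> m = u)" for u
  have rep: "rep (\<mu> m) \<in> K \<and> \<mu> (rep (\<mu> m)) = \<mu> m" if "m \<in> K" for m
    unfolding rep_def using that by (metis (mono_tags, lifting) someI)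
  have "(\<Sum>m\<in>K. Poly_Mapping.single (rep (\<mu> m)) (c m)) =
      (\<Sum>u\<in>\<mu> ` K. \<Sum>m\<in>{m \<in> K. \<mu> m = u}. Poly_Mapping.single (rep (\<mu> m)) (c m))"
    using \<open>finite K\<close> by (rule sum.image_gen)
  also have "\<dots> = (\<Sum>u\<in>\<mu> ` K. Poly_Mapping.single (rep u) (\<Sum>m\<in>{m \<in> K. \<mu> m = u}. c m))"
    by (intro sum.cong refl) (simp add: single_sum)
  finally have representatives: "(\<Sum>m\<in>K. Poly_Mapping.single (rep (\<mu> m)) (c m)) = 0"
    by (simp add: fibre_sums)
  have "(\<Sum>m\<in>K. Poly_Mapping.single m (c m)) =
      (\<Sum>m\<in>K. Poly_Mapping.single 0 (c m) * (Poly_Mapping.single m 1 - Poly_Mapping.single (rep (\<mu> m)) 1))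
      + (\<Sum>m\<in>K. Poly_Mapping.single (rep (\<mu> m)) (c m))"
    by (simp add: sum.distrib[symmetric] right_diff_distrib mult_single)
  also have "\<dots> \<in> J"
    unfolding representatives using rep
    by (simp add: sum_mem_ideal[OF J] const_mult_mem_ideal[OF J] congruent)
  finally show ?thesis .
qed

section \<open>Lowest parts with respect to one variable\<close>

lemma keys_mult_Var: "a \<in> Poly_Mapping.keys (q * Var t) \<Longrightarrow> 1 \<le> Poly_Mapping.lookup a t"
  using keys_mult[of q "Var t"] by (auto simp: Var_def lookup_add)

lemma keys_mult_degree_gt:
  fixes h M :: "'k::comm_ring_1 mpoly"
  assumes "\<And>a. a \<in> Poly_Mapping.keys h \<Longrightarrow> 1 \<le> Poly_Mapping.lookup a t"
    and "\<forall>n\<in>Poly_Mapping.keys M. d \<le> Poly_Mapping.lookup n t"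
    and "v \<in> Poly_Mapping.keys (h * M)"
  shows "d < Poly_Mapping.lookup v t"
  using keys_mult[of h M] assms by (fastforce simp: lookup_add)

(* x^\<delta> is not divisible by x_t while every monomial of h is, so the monomials of least
  x_t-degree in (x^\<delta> + h) M all come from x^\<delta> M. *)
lemma lowest_part_of_multiple:
  fixes h M :: "'k::comm_ring_1 mpoly"
  assumes \<delta>: "Poly_Mapping.lookup \<delta> t = 0"
    and h: "\<And>a. a \<in> Poly_Mapping.keys h \<Longrightarrow> 1 \<le> Poly_Mapping.lookup a t"
    and low: "\<forall>u\<in>Poly_Mapping.keys ((Poly_Mapping.single \<delta> 1 + h) * M). d \<le> Poly_Mapping.lookup u t"
    and u: "u \<in> Poly_Mapping.keys ((Poly_Mapping.single \<delta> 1 + h) * M)" "Poly_Mapping.lookup u t = d"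
  shows "\<exists>n. u = \<delta> + n"
proof -
  have M_high: "\<forall>n\<in>Poly_Mapping.keys M. d \<le> Poly_Mapping.lookup n t"
  proof (rule ccontr)
    assume "\<not> ?thesis"
    then obtain n1 where "n1 \<in> Poly_Mapping.keys M" "Poly_Mapping.lookup n1 t < d"
      by auto
    then obtain n0 where n0: "n0 \<in> Poly_Mapping.keys M" "Poly_Mapping.lookup n0 t < d"
      and least: "\<forall>n\<in>Poly_Mapping.keys M. Poly_Mapping.lookup n0 t \<le> Poly_Mapping.lookup n t"
      using ex_has_least_nat[of "\<lambda>n. n \<in> Poly_Mapping.keys M" n1 "\<lambda>n. Poly_Mapping.lookup n t"]
      by (metis le_less_trans)
    have "\<delta> + n0 \<notin> Poly_Mapping.keys (h * M)"
      using keys_mult_degree_gt[OF h least, where v = "\<delta> + n0"] \<delta> by (auto simp: lookup_add)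
    then have "Poly_Mapping.lookup ((Poly_Mapping.single \<delta> 1 + h) * M) (\<delta> + n0) = Poly_Mapping.lookup M n0"
      by (simp add: distrib_right lookup_add lookup_single_mult in_keys_iff)
    then have "d \<le> Poly_Mapping.lookup (\<delta> + n0) t"
      using low n0(1) by (simp add: in_keys_iff)
    then show False
      using n0(2) \<delta> by (simp add: lookup_add)
  qed
  have "u \<notin> Poly_Mapping.keys (h * M)"
    using keys_mult_degree_gt[OF h M_high] u(2) by auto
  then have "u \<in> Poly_Mapping.keys (Poly_Mapping.single \<delta> 1 * M)"
    using u(1) keys_add[of "Poly_Mapping.single \<delta> 1 * M" "h * M"] by (auto simp: distrib_right)
  then show ?thesis
    by (rule keys_single_mult)
qed

context
  fixes \<mu> :: "(nat \<Rightarrow>\<^sub>0 nat) \<Rightarrow> (nat \<Rightarrow>\<^sub>0 nat)" and t :: nat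
  assumes degree_at: "\<And>m. Poly_Mapping.lookup (\<mu> m) t = mdeg m"
begin

lemma low_deg_le_mono_map_keys:
  "u \<in> Poly_Mapping.keys (mono_map \<mu> f) \<Longrightarrow> low_deg f \<le> Poly_Mapping.lookup u t"
  using keys_mono_map[of u \<mu> f] low_deg_le degree_at by metis

lemma lookup_mono_map_init_form:
  "Poly_Mapping.lookup (mono_map \<mu> (init_form f)) u =
     (if Poly_Mapping.lookup u t = low_deg f then Poly_Mapping.lookup (mono_map \<mu> f) u else 0)"
proof -
  have "Poly_Mapping.lookup (mono_map \<mu> (init_form f)) u =
      (\<Sum>m\<in>Poly_Mapping.keys f. if \<mu> m = u then Poly_Mapping.lookup (init_form f) m else 0)"
    by (subst mono_map_superset[of "Poly_Mapping.keys f"])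
      (simp_all add: keys_init_form_subset lookup_sum_single)
  also have "\<dots> = (\<Sum>m\<in>Poly_Mapping.keys f. if Poly_Mapping.lookup u t = low_deg f then
      (if \<mu> m = u then Poly_Mapping.lookup f m else 0) else 0)"
    by (rule sum.cong) (auto simp: lookup_init_form degree_at)
  finally show ?thesis
    by (simp add: lookup_mono_map)
qed

end

section \<open>The substitution for the matrix\<close>

lemma det3_reindex_columns: "det3 (\<lambda>i j. N i (\<kappa> j)) a b c = det3 N (\<kappa> a) (\<kappa> b) (\<kappa> c)"
  unfolding det3_def ..

lemma det3_scale_columns: "det3 (\<lambda>i j. L j * M i j) a b c = L a * L b * L c * det3 M a b c"
  unfolding det3_def by (simp add: algebra_simps)

lemma det3_012_dvd:
  assumes "x < 3" "y < 3" "z < 3"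
  shows "det3 N 0 1 2 dvd det3 N x y z"
proof -
  have "x \<in> {0, 1, 2}" "y \<in> {0, 1, 2}" "z \<in> {0, 1, 2}"
    using assms by auto
  then have "det3 N x y z \<in> {det3 N 0 1 2, - det3 N 0 1 2, 0}"
    by (elim insertE emptyE) (simp_all add: det3_def algebra_simps)
  then show ?thesis
    by auto
qed

(* The exponent map of the substitution, with z and T the variables 0 and 2p+1. Variables outside
  {1..2p} only contribute to the T-degree. *)
definition param_mon :: "nat \<Rightarrow> (nat \<Rightarrow>\<^sub>0 nat) \<Rightarrow> (nat \<Rightarrow>\<^sub>0 nat)" where
  "param_mon p m = Abs_poly_mapping (\<lambda>j.
     if j = 0 then (\<Sum>i\<in>{p+1..2*p-1}. Poly_Mapping.lookup m i)
     else if j < p then Poly_Mapping.lookup m j + Poly_Mapping.lookup m (p + j)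
     else if j = p \<or> j = 2*p then Poly_Mapping.lookup m j
     else if j = 2*p + 1 then mdeg m
     else 0)"

lemma lookup_param_mon:
  "Poly_Mapping.lookup (param_mon p m) j =
    (if j = 0 then (\<Sum>i\<in>{p+1..2*p-1}. Poly_Mapping.lookup m i)
     else if j < p then Poly_Mapping.lookup m j + Poly_Mapping.lookup m (p + j)
     else if j = p \<or> j = 2*p then Poly_Mapping.lookup m j
     else if j = 2*p + 1 then mdeg m
     else 0)"
proof -
  have "finite {j. (if j = 0 then (\<Sum>i\<in>{p+1..2*p-1}. Poly_Mapping.lookup m i)
     else if j < p then Poly_Mapping.lookup m j + Poly_Mapping.lookup m (p + j)
     else if j = p \<or> j = 2*p then Poly_Mapping.lookup m j
     else if j = 2*p + 1 then mdeg m
     else 0) \<noteq> 0}"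
    by (rule finite_subset[of _ "{..2*p+1}"]) auto
  then show ?thesis
    unfolding param_mon_def by simp
qed

lemma param_mon_add: "param_mon p (m + n) = param_mon p m + param_mon p n"
  by (rule poly_mapping_eqI) (simp add: lookup_param_mon lookup_add sum.distrib mdeg_add)

lemma param_mon_degree: "Poly_Mapping.lookup (param_mon p m) (2*p + 1) = mdeg m"
  by (simp add: lookup_param_mon)

lemma param_mon_single:
  "0 < k \<Longrightarrow> k < p \<Longrightarrow>
     param_mon p (Poly_Mapping.single k 1) = Poly_Mapping.single k 1 + Poly_Mapping.single (2*p+1) 1"
  "0 < k \<Longrightarrow> k < p \<Longrightarrow> param_mon p (Poly_Mapping.single (p + k) 1) =
     Poly_Mapping.single 0 1 + Poly_Mapping.single k 1 + Poly_Mapping.single (2*p+1) 1"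
  "0 < p \<Longrightarrow> param_mon p (Poly_Mapping.single p 1) = Poly_Mapping.single p 1 + Poly_Mapping.single (2*p+1) 1"
  "0 < p \<Longrightarrow>
     param_mon p (Poly_Mapping.single (2*p) 1) = Poly_Mapping.single (2*p) 1 + Poly_Mapping.single (2*p+1) 1"
  by (auto intro!: poly_mapping_eqI simp: lookup_param_mon lookup_add lookup_single when_def)

lemma mono_map_param_Var:
  "0 < k \<Longrightarrow> k < p \<Longrightarrow> mono_map (param_mon p) (Var k) = Var k * Var (2*p+1)"
  "0 < k \<Longrightarrow> k < p \<Longrightarrow> mono_map (param_mon p) (Var (p + k)) = Var 0 * Var k * Var (2*p+1)"
  "0 < p \<Longrightarrow> mono_map (param_mon p) (Var p) = Var p * Var (2*p+1)"
  "0 < p \<Longrightarrow> mono_map (param_mon p) (Var (2*p)) = Var (2*p) * Var (2*p+1)"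
  unfolding Var_def mono_map_single by (simp_all add: param_mon_single mult_single del: One_nat_def)

lemma param_mon_exchange:
  assumes "0 < k" "k < p" "0 < l" "l < p"
  shows "param_mon p (Poly_Mapping.single k 1) + param_mon p (Poly_Mapping.single (p + l) 1) =
    param_mon p (Poly_Mapping.single l 1) + param_mon p (Poly_Mapping.single (p + k) 1)"
  using assms by (simp only: param_mon_single) (simp add: ac_simps)

definition param_col :: "nat \<Rightarrow> nat \<Rightarrow> nat \<Rightarrow> 'k::comm_ring_1 mpoly" where
  "param_col p i k =
    (if k = 0 then (if i = 0 then 1 else if i = 1 then Var p * Var (2*p+1) else Var (2*p) * Var (2*p+1))
     else if k = 1 then (if i = 0 then 1 else if i = 1 then Var 0 else 0)
     else (if i = 0 then 0 else if i = 1 then 1 else Var 0))"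

definition col_type :: "nat \<Rightarrow> nat" where
  "col_type j = (if j = 0 then 0 else if odd j then 1 else 2)"

lemma col_type_less: "col_type j < 3"
  unfolding col_type_def by simp

definition col_scale :: "nat \<Rightarrow> nat \<Rightarrow> 'k::comm_ring_1 mpoly" where
  "col_scale p j = (if j = 0 then 1 else Var ((j + 1) div 2) * Var (2*p+1))"

lemma mono_map_matA:
  assumes "0 < p" "j < 2*p - 1"
  shows "mono_map (param_mon p) (matA p i j) = col_scale p j * param_col p i (col_type j)"
proof (cases "j = 0")
  case True
  then show ?thesis
    using assms
    by (simp add: matA_def col_scale_def param_col_def col_type_def mono_map_param_Var mono_map_one[OF param_mon_add])
next
  case False
  define k where "k = (j + 1) div 2"
  have k: "0 < k" "k < p"
    using assms False unfolding k_def by auto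
  show ?thesis
  proof (cases "odd j")
    case True
    then show ?thesis
      using False k unfolding matA_def col_scale_def param_col_def col_type_def k_def[symmetric]
      by (simp add: mono_map_param_Var mult_ac)
  next
    case even: False
    then have "j div 2 = k"
      unfolding k_def by presburger
    then show ?thesis
      using False even k unfolding matA_def col_scale_def param_col_def col_type_def k_def[symmetric]
      by (simp add: mono_map_param_Var mult_ac)
  qed
qed

definition param_det :: "nat \<Rightarrow> 'k::comm_ring_1 mpoly" where
  "param_det p = det3 (param_col p) 0 1 2"

lemma param_det_eq: "param_det p = Var 0 * Var 0 + (Var (2*p) - Var p * Var 0) * Var (2*p+1)"
  unfolding param_det_def det3_def param_col_def by (simp add: algebra_simps)

lemma param_det_dvd_minor:
  assumes "0 < p" "a < b" "b < c" "c < 2*p - 1"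
  shows "param_det p dvd mono_map (param_mon p) (det3 (matA p) a b c)"
proof -
  have "mono_map (param_mon p) (det3 (matA p) a b c) =
      det3 (\<lambda>i j. col_scale p j * param_col p i (col_type j)) a b c"
    using assms unfolding mono_map_det3[OF param_mon_add] by (simp add: det3_def mono_map_matA)
  also have "\<dots> = col_scale p a * col_scale p b * col_scale p c *
      det3 (param_col p) (col_type a) (col_type b) (col_type c)"
    by (simp add: det3_scale_columns det3_reindex_columns)
  finally show ?thesis
    unfolding param_det_def using det3_012_dvd[OF col_type_less col_type_less col_type_less]
    by (metis dvd_mult)
qed

lemma matA_polys_in:
  assumes "0 < p" "j < 2*p - 1"
  shows "matA p i j \<in> polys_in {1..2*p}"
proof (cases "j = 0")
  case True
  then show ?thesis
    using assms unfolding matA_def by (auto intro!: polys_in_Var)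
next
  case False
  define k where "k = (j + 1) div 2"
  have k: "k \<in> {1..2*p}" "p + k \<in> {1..2*p}"
    using assms False unfolding k_def by auto
  have "j div 2 = k" if "even j"
    using that unfolding k_def by presburger
  then show ?thesis
    using False k unfolding matA_def k_def[symmetric] by (auto intro!: polys_in_Var)
qed

lemma minors3_matA_polys_in:
  assumes "0 < p"
  shows "minors3 (matA p :: nat \<Rightarrow> nat \<Rightarrow> 'k::comm_ring_1 mpoly) (2*p - 1) \<subseteq> polys_in {1..2*p}"
proof
  fix f :: "'k mpoly"
  assume "f \<in> minors3 (matA p) (2*p - 1)"
  then obtain a b c where f: "f = det3 (matA p) a b c" and abc: "a < b" "b < c" "c < 2*p - 1"
    unfolding minors3_def by blast
  have "det3 (matA p) a b c \<in> polys_in {1..2*p}"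
  proof (rule det3_polys_in)
    fix i j assume "j \<in> {a, b, c}"
    then have "j < 2*p - 1"
      using abc by auto
    then show "matA p i j \<in> polys_in {1..2*p}"
      by (rule matA_polys_in[OF assms])
  qed
  then show "f \<in> polys_in {1..2*p}"
    unfolding f .
qed

lemma ideal_minors3_subset:
  assumes "0 < p"
  shows "ideal_gen {1..2*p} (minors3 (matA p) (2*p - 1))
           \<subseteq> {f \<in> polys_in {1..2*p}. param_det p dvd mono_map (param_mon p) f}"
proof (rule ideal_gen_least[OF mono_map_dvd_is_ideal[OF param_mon_add]], rule subsetI)
  fix f assume "f \<in> minors3 (matA p) (2*p - 1)"
  then show "f \<in> {f \<in> polys_in {1..2*p}. param_det p dvd mono_map (param_mon p) f}"
    using minors3_matA_polys_in[OF assms] param_det_dvd_minor[OF assms] unfolding minors3_def by auto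
qed

lemma param_init_form_z_degree:
  fixes f :: "'k::comm_ring_1 mpoly"
  assumes "param_det p dvd mono_map (param_mon p) f"
    and u: "u \<in> Poly_Mapping.keys (mono_map (param_mon p) (init_form f))"
  shows "2 \<le> Poly_Mapping.lookup u 0"
proof -
  obtain M where M: "mono_map (param_mon p) f = param_det p * M"
    using assms(1) by blast
  \<comment> \<open>the exponent of z^2, written as a sum since the simplifier turns single 0 2 into the numeral 2\<close>
  define \<delta> :: "nat \<Rightarrow>\<^sub>0 nat" where "\<delta> = Poly_Mapping.single 0 1 + Poly_Mapping.single 0 1"
  have h: "param_det p = (Poly_Mapping.single \<delta> 1 + (Var (2*p) - Var p * Var 0) * Var (2*p+1) :: 'k mpoly)"
    unfolding param_det_eq \<delta>_def Var_mult ..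
  have \<delta>: "Poly_Mapping.lookup \<delta> (2*p+1) = 0"
    by (simp add: \<delta>_def lookup_add lookup_single)
  have u_keys: "u \<in> Poly_Mapping.keys (param_det p * M)" and u_deg: "Poly_Mapping.lookup u (2*p+1) = low_deg f"
    using u unfolding M[symmetric]
    by (simp_all add: in_keys_iff lookup_mono_map_init_form[OF param_mon_degree] split: if_splits)
  have low: "\<forall>v\<in>Poly_Mapping.keys (param_det p * M). low_deg f \<le> Poly_Mapping.lookup v (2*p+1)"
  proof
    fix v assume "v \<in> Poly_Mapping.keys (param_det p * M)"
    then show "low_deg f \<le> Poly_Mapping.lookup v (2*p+1)"
      unfolding M[symmetric] by (rule low_deg_le_mono_map_keys[OF param_mon_degree])
  qed
  obtain n where "u = \<delta> + n"
    using lowest_part_of_multiple[OF \<delta> keys_mult_Var[of _ "Var (2*p) - Var p * Var 0"]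
        low[unfolded h] u_keys[unfolded h] u_deg]
    by blast
  then show ?thesis
    by (simp add: \<delta>_def lookup_add)
qed

section \<open>Membership in the target ideal\<close>

definition target_ideal :: "nat \<Rightarrow> 'k::comm_ring_1 mpoly set" where
  "target_ideal p = ideal_sum {1..2*p} (ideal_gen {1..2*p} (minors2 (matB p) (p - 1)))
     (ideal_mult {1..2*p} (ideal_gen {1..2*p} (Var ` {p+1..2*p-1})) (ideal_gen {1..2*p} (Var ` {p+1..2*p-1})))"

lemma minors2_matB_polys_in: "minors2 (matB p :: nat \<Rightarrow> nat \<Rightarrow> 'k::comm_ring_1 mpoly) (p - 1) \<subseteq> polys_in {1..2*p}"
  unfolding minors2_def matB_def by (auto intro!: polys_in_diff polys_in_mult polys_in_Var)

lemma Var_image_polys_in: "A \<subseteq> V \<Longrightarrow> Var ` A \<subseteq> (polys_in V :: 'k::comm_ring_1 mpoly set)"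
  by (auto intro: polys_in_Var)

lemma target_ideal_is_ideal: "is_ideal_in {1..2*p} (target_ideal p)"
  unfolding target_ideal_def
  by (intro ideal_sum_is_ideal ideal_subset_polys_in ideal_gen_is_ideal ideal_mult_is_ideal
      minors2_matB_polys_in Var_image_polys_in) auto

lemma minor2_mem_target_ideal:
  assumes "0 < j" "j < p" "0 < k" "k < p"
  shows "Var j * Var (p + k) - Var k * Var (p + j) \<in> target_ideal p"
proof -
  have minor: "Var j * Var (p + k) - Var k * Var (p + j) \<in> target_ideal p" if "0 < j" "j < k" "k < p" for j k
  proof -
    have "Var j * Var (p + k) - Var k * Var (p + j) \<in> minors2 (matB p) (p - 1)"
      unfolding minors2_def
      by (rule CollectI, rule exI[of _ "j - 1"], rule exI[of _ "k - 1"]) (use that in \<open>auto simp: matB_def\<close>)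
    then show ?thesis
      unfolding target_ideal_def by (intro subsetD[OF subset_ideal_sum(1)] subsetD[OF ideal_gen_subset])
  qed
  consider "j < k" | "j = k" | "k < j"
    by linarith
  then show ?thesis
  proof cases
    case 3
    then have "Var k * Var (p + j) - Var j * Var (p + k) \<in> target_ideal p"
      using assms by (intro minor)
    then have "0 - (Var k * Var (p + j) - Var j * Var (p + k)) \<in> target_ideal p"
      by (rule diff_mem_ideal[OF target_ideal_is_ideal zero_mem_ideal[OF target_ideal_is_ideal]])
    then show ?thesis
      by simp
  qed (use assms minor zero_mem_ideal[OF target_ideal_is_ideal] in auto)
qed

lemma y_mult_mem_target_ideal:
  assumes "i \<in> {p+1..2*p-1}" "j \<in> {p+1..2*p-1}"
  shows "Var i * Var j \<in> target_ideal p"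
proof -
  have "Var i \<in> ideal_gen {1..2*p} (Var ` {p+1..2*p-1})" "Var j \<in> ideal_gen {1..2*p} (Var ` {p+1..2*p-1})"
    using assms by (simp_all add: subsetD[OF ideal_gen_subset])
  then show ?thesis
    unfolding target_ideal_def by (intro subsetD[OF subset_ideal_sum(2)] mult_mem_ideal_mult)
qed

lemma param_mon_z_degree: "Poly_Mapping.lookup (param_mon p m) 0 = (\<Sum>i\<in>{p+1..2*p-1}. Poly_Mapping.lookup m i)"
  by (simp add: lookup_param_mon)

lemma lookup_eq_0_if_z_free:
  "Poly_Mapping.lookup (param_mon p m) 0 = 0 \<Longrightarrow> i \<in> {p+1..2*p-1} \<Longrightarrow> Poly_Mapping.lookup m i = 0"
  by (simp add: param_mon_z_degree)

lemma monomial_split_y: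
  assumes "Poly_Mapping.keys m \<subseteq> {1..2*p}" "0 < Poly_Mapping.lookup (param_mon p m) 0"
  obtains k w where "0 < k" "k < p" "m = w + Poly_Mapping.single (p + k) 1" "Poly_Mapping.keys w \<subseteq> {1..2*p}"
    "Poly_Mapping.lookup (param_mon p w) 0 + 1 = Poly_Mapping.lookup (param_mon p m) 0"
proof -
  let ?Y = "{p+1..2*p-1}"
  have "0 < (\<Sum>i\<in>?Y. Poly_Mapping.lookup m i)"
    using assms(2) by (simp add: param_mon_z_degree)
  then obtain i w where i: "i \<in> ?Y" and m: "m = w + Poly_Mapping.single i 1"
    by (rule monomial_split_var[OF finite_atLeastAtMost])
  have "(\<Sum>j\<in>?Y. Poly_Mapping.lookup m j) = (\<Sum>j\<in>?Y. Poly_Mapping.lookup w j) + 1"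
    unfolding m by (rule sum_lookup_add_single[OF finite_atLeastAtMost i])
  then have "Poly_Mapping.lookup (param_mon p w) 0 + 1 = Poly_Mapping.lookup (param_mon p m) 0"
    by (simp add: param_mon_z_degree)
  moreover have "Poly_Mapping.keys w \<subseteq> {1..2*p}"
    using assms(1) by (simp add: m keys_add_nat)
  moreover have "0 < i - p" "i - p < p" "m = w + Poly_Mapping.single (p + (i - p)) 1"
    using i m by auto
  ultimately show thesis
    using that by blast
qed

lemma monomial_mem_target_ideal:
  assumes "Poly_Mapping.keys m \<subseteq> {1..2*p}" "2 \<le> Poly_Mapping.lookup (param_mon p m) 0"
  shows "Poly_Mapping.single m 1 \<in> target_ideal p"
proof -
  obtain k w where k: "0 < k" "k < p" and m: "m = w + Poly_Mapping.single (p + k) 1"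
    and w: "Poly_Mapping.keys w \<subseteq> {1..2*p}"
    and w_deg: "Poly_Mapping.lookup (param_mon p w) 0 + 1 = Poly_Mapping.lookup (param_mon p m) 0"
    by (rule monomial_split_y[OF assms(1)]) (use assms(2) in simp)
  obtain l v where l: "0 < l" "l < p" and w_split: "w = v + Poly_Mapping.single (p + l) 1"
    and v: "Poly_Mapping.keys v \<subseteq> {1..2*p}"
    by (rule monomial_split_y[OF w]) (use assms(2) w_deg in simp)
  have factor: "Poly_Mapping.single m 1 = Poly_Mapping.single v 1 * (Var (p + l) * Var (p + k))"
    by (simp add: m w_split Var_mult mult_single add.assoc)
  have "Var (p + l) * Var (p + k) \<in> target_ideal p"
    using k l by (intro y_mult_mem_target_ideal) auto
  then show ?thesis
    unfolding factor by (rule mult_mem_ideal[OF target_ideal_is_ideal polys_in_single[OF v]])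
qed

lemma param_mon_inj_on_z_free:
  assumes "0 < p" "Poly_Mapping.keys w \<subseteq> {1..2*p}" "Poly_Mapping.keys w' \<subseteq> {1..2*p}"
    and z_free: "Poly_Mapping.lookup (param_mon p w) 0 = 0"
    and eq: "param_mon p w = param_mon p w'"
  shows "w = w'"
proof (rule poly_mapping_eqI)
  fix i
  have z_free': "Poly_Mapping.lookup (param_mon p w') 0 = 0"
    using z_free eq by simp
  have lookup_eq: "Poly_Mapping.lookup (param_mon p w) i = Poly_Mapping.lookup (param_mon p w') i"
    using eq by simp
  consider "0 < i \<and> i < p" | "i = p \<or> i = 2*p" | "i \<in> {p+1..2*p-1}" | "i \<notin> {1..2*p}"
    by fastforce
  then show "Poly_Mapping.lookup w i = Poly_Mapping.lookup w' i"
  proof cases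
    case 1
    then have "p + i \<in> {p+1..2*p-1}"
      by auto
    then show ?thesis
      using 1 lookup_eq lookup_eq_0_if_z_free[OF z_free] lookup_eq_0_if_z_free[OF z_free']
      by (simp add: lookup_param_mon)
  next
    case 2
    then show ?thesis
      using lookup_eq \<open>0 < p\<close> by (auto simp: lookup_param_mon)
  next
    case 3
    then show ?thesis
      using lookup_eq_0_if_z_free[OF z_free] lookup_eq_0_if_z_free[OF z_free'] by simp
  next
    case 4
    then show ?thesis
      using assms(2,3) by (metis in_keys_iff subsetD)
  qed
qed

(* Comparing the exponents of x_l shows w = v x_l; then w' = v x_k, since neither contains a y and
  both have the same image. *)
lemma param_mon_eq_exchange:
  assumes p: "0 < p" and kl: "0 < k" "k < p" "0 < l" "l < p"
    and w: "Poly_Mapping.keys w \<subseteq> {1..2*p}" "Poly_Mapping.lookup (param_mon p w) 0 = 0"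
    and w': "Poly_Mapping.keys w' \<subseteq> {1..2*p}" "Poly_Mapping.lookup (param_mon p w') 0 = 0"
    and eq: "param_mon p (w + Poly_Mapping.single (p + k) 1) = param_mon p (w' + Poly_Mapping.single (p + l) 1)"
    and "k \<noteq> l"
  obtains v where "w = v + Poly_Mapping.single l 1" "w' = v + Poly_Mapping.single k 1"
proof -
  have "Poly_Mapping.lookup (param_mon p (w + Poly_Mapping.single (p + k) 1)) l = Poly_Mapping.lookup w l"
    using kl \<open>k \<noteq> l\<close> lookup_eq_0_if_z_free[OF w(2), of "p + l"]
    by (simp add: lookup_param_mon lookup_add lookup_single)
  moreover have "Poly_Mapping.lookup (param_mon p (w' + Poly_Mapping.single (p + l) 1)) l = Poly_Mapping.lookup w' l + 1"
    using kl lookup_eq_0_if_z_free[OF w'(2), of "p + l"]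
    by (simp add: lookup_param_mon lookup_add lookup_single)
  ultimately have "0 < (\<Sum>i\<in>{l}. Poly_Mapping.lookup w i)"
    using eq by simp
  then obtain v where w_split: "w = v + Poly_Mapping.single l 1"
    by (rule monomial_split_var[OF finite.insertI[OF finite.emptyI]]) simp
  have "param_mon p (v + Poly_Mapping.single k 1) + param_mon p (Poly_Mapping.single (p + l) 1) =
      param_mon p v + (param_mon p (Poly_Mapping.single k 1) + param_mon p (Poly_Mapping.single (p + l) 1))"
    by (simp add: param_mon_add add.assoc)
  also have "\<dots> = param_mon p v + (param_mon p (Poly_Mapping.single l 1) + param_mon p (Poly_Mapping.single (p + k) 1))"
    by (simp only: param_mon_exchange[OF kl])
  also have "\<dots> = param_mon p (w + Poly_Mapping.single (p + k) 1)"
    by (simp add: w_split param_mon_add add.assoc)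
  also have "\<dots> = param_mon p (w' + Poly_Mapping.single (p + l) 1)"
    by (rule eq)
  finally have "param_mon p (v + Poly_Mapping.single k 1) = param_mon p w'"
    by (simp add: param_mon_add)
  moreover have "Poly_Mapping.keys (v + Poly_Mapping.single k 1) \<subseteq> {1..2*p}"
    using w(1) kl by (auto simp: w_split keys_add_nat)
  moreover have "Poly_Mapping.lookup (param_mon p (v + Poly_Mapping.single k 1)) 0 = 0"
    using w(2)
    unfolding w_split param_mon_add lookup_add param_mon_single(1)[OF kl(1,2)] param_mon_single(1)[OF kl(3,4)]
    using kl by (simp add: lookup_single)
  ultimately have "w' = v + Poly_Mapping.single k 1"
    using param_mon_inj_on_z_free[OF p _ w'(1)] by metis
  then show thesis
    using that w_split by blast
qed

lemma exchange_mem_target_ideal: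
  assumes p: "0 < p" and kl: "0 < k" "k < p" "0 < l" "l < p"
    and w: "Poly_Mapping.keys w \<subseteq> {1..2*p}" "Poly_Mapping.lookup (param_mon p w) 0 = 0"
    and w': "Poly_Mapping.keys w' \<subseteq> {1..2*p}" "Poly_Mapping.lookup (param_mon p w') 0 = 0"
    and eq: "param_mon p (w + Poly_Mapping.single (p + k) 1) = param_mon p (w' + Poly_Mapping.single (p + l) 1)"
  shows "Poly_Mapping.single (w + Poly_Mapping.single (p + k) 1) 1
           - Poly_Mapping.single (w' + Poly_Mapping.single (p + l) 1) 1 \<in> target_ideal p"
proof (cases "k = l")
  case True
  then have "param_mon p w = param_mon p w'"
    using eq by (simp add: param_mon_add)
  then have "w = w'"
    by (rule param_mon_inj_on_z_free[OF p w(1) w'(1) w(2)])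
  then show ?thesis
    using True by (simp add: zero_mem_ideal[OF target_ideal_is_ideal])
next
  case False
  then obtain v where w_split: "w = v + Poly_Mapping.single l 1" and w'_split: "w' = v + Poly_Mapping.single k 1"
    by (rule param_mon_eq_exchange[OF p kl w w' eq])
  have factor: "Poly_Mapping.single (w + Poly_Mapping.single (p + k) 1) 1
        - Poly_Mapping.single (w' + Poly_Mapping.single (p + l) 1) 1
      = Poly_Mapping.single v 1 * (Var l * Var (p + k) - Var k * Var (p + l))"
    by (simp add: w_split w'_split Var_mult mult_single right_diff_distrib ac_simps)
  have "Poly_Mapping.single v 1 \<in> polys_in {1..2*p}"
    using w(1) by (intro polys_in_single) (auto simp: w_split keys_add_nat)
  then show ?thesis
    unfolding factor by (rule mult_mem_ideal[OF target_ideal_is_ideal _ minor2_mem_target_ideal[OF kl(3,4,1,2)]])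
qed

lemma monomials_congruent_mod_target_ideal:
  assumes p: "0 < p" and m: "Poly_Mapping.keys m \<subseteq> {1..2*p}" and m': "Poly_Mapping.keys m' \<subseteq> {1..2*p}"
    and z: "Poly_Mapping.lookup (param_mon p m) 0 < 2" and eq: "param_mon p m = param_mon p m'"
  shows "Poly_Mapping.single m 1 - Poly_Mapping.single m' 1 \<in> target_ideal p"
proof (cases "Poly_Mapping.lookup (param_mon p m) 0 = 0")
  case True
  then show ?thesis
    using param_mon_inj_on_z_free[OF p m m' True eq] zero_mem_ideal[OF target_ideal_is_ideal] by simp
next
  case False
  then have one: "Poly_Mapping.lookup (param_mon p m) 0 = 1" "Poly_Mapping.lookup (param_mon p m') 0 = 1"
    using z eq by simp_all
  obtain k w where k: "0 < k" "k < p" and m_split: "m = w + Poly_Mapping.single (p + k) 1"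
    and w: "Poly_Mapping.keys w \<subseteq> {1..2*p}"
      "Poly_Mapping.lookup (param_mon p w) 0 + 1 = Poly_Mapping.lookup (param_mon p m) 0"
    by (rule monomial_split_y[OF m]) (simp add: one)
  obtain l w' where l: "0 < l" "l < p" and m'_split: "m' = w' + Poly_Mapping.single (p + l) 1"
    and w': "Poly_Mapping.keys w' \<subseteq> {1..2*p}"
      "Poly_Mapping.lookup (param_mon p w') 0 + 1 = Poly_Mapping.lookup (param_mon p m') 0"
    by (rule monomial_split_y[OF m']) (simp add: one)
  show ?thesis
    unfolding m_split m'_split
    using w w' one eq unfolding m_split m'_split
    by (intro exchange_mem_target_ideal[OF p k l]) simp_all
qed

lemma fibre_sum_eq_0_if_param_z_degree:
  assumes "\<forall>u\<in>Poly_Mapping.keys (mono_map (param_mon p) g). 2 \<le> Poly_Mapping.lookup u 0"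
  shows "(\<Sum>m\<in>{m \<in> Poly_Mapping.keys g - {m. 2 \<le> Poly_Mapping.lookup (param_mon p m) 0}. param_mon p m = u}.
           Poly_Mapping.lookup g m) = 0"
proof (cases "2 \<le> Poly_Mapping.lookup u 0")
  case True
  then have "{m \<in> Poly_Mapping.keys g - {m. 2 \<le> Poly_Mapping.lookup (param_mon p m) 0}. param_mon p m = u} = {}"
    by auto
  then show ?thesis
    by (simp only: sum.empty)
next
  case False
  then have "{m \<in> Poly_Mapping.keys g - {m. 2 \<le> Poly_Mapping.lookup (param_mon p m) 0}. param_mon p m = u} =
      {m \<in> Poly_Mapping.keys g. param_mon p m = u}"
    by auto
  moreover have "Poly_Mapping.lookup (mono_map (param_mon p) g) u = 0"
    using assms False by (auto simp: in_keys_iff)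
  ultimately show ?thesis
    by (simp add: fibre_sum_eq_lookup_mono_map)
qed

lemma mem_target_ideal_if_param_z_degree:
  assumes p: "0 < p" and g: "g \<in> polys_in {1..2*p}"
    and z: "\<forall>u\<in>Poly_Mapping.keys (mono_map (param_mon p) g). 2 \<le> Poly_Mapping.lookup u 0"
  shows "g \<in> target_ideal p"
proof -
  let ?K = "Poly_Mapping.keys g" and ?c = "Poly_Mapping.lookup g"
  let ?P = "{m. 2 \<le> Poly_Mapping.lookup (param_mon p m) 0}"
  have keys_V: "Poly_Mapping.keys m \<subseteq> {1..2*p}" if "m \<in> ?K" for m
    using g that unfolding polys_in_def by blast
  have "g = (\<Sum>m\<in>?K. Poly_Mapping.single m (?c m))"
    by (rule poly_mapping_sum_single)
  also have "\<dots> = (\<Sum>m\<in>?K \<inter> ?P. Poly_Mapping.single m (?c m)) +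
      (\<Sum>m\<in>?K - ?P. Poly_Mapping.single m (?c m))"
    by (rule sum.Int_Diff) simp
  also have "\<dots> \<in> target_ideal p"
  proof (rule add_mem_ideal[OF target_ideal_is_ideal])
    have "Poly_Mapping.single m (?c m) \<in> target_ideal p" if "m \<in> ?K \<inter> ?P" for m
    proof -
      have "Poly_Mapping.single m (?c m) = Poly_Mapping.single 0 (?c m) * Poly_Mapping.single m 1"
        by (simp add: mult_single)
      then show ?thesis
        using that keys_V by (simp add: const_mult_mem_ideal[OF target_ideal_is_ideal] monomial_mem_target_ideal)
    qed
    then show "(\<Sum>m\<in>?K \<inter> ?P. Poly_Mapping.single m (?c m)) \<in> target_ideal p"
      by (rule sum_mem_ideal[OF target_ideal_is_ideal])
  next
    show "(\<Sum>m\<in>?K - ?P. Poly_Mapping.single m (?c m)) \<in> target_ideal p"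
    proof (rule sum_single_mem_ideal_if_fibres_congruent[OF target_ideal_is_ideal])
      fix m m' assume "m \<in> ?K - ?P" "m' \<in> ?K - ?P" "param_mon p m = param_mon p m'"
      then show "Poly_Mapping.single m 1 - Poly_Mapping.single m' 1 \<in> target_ideal p"
        using keys_V by (intro monomials_congruent_mod_target_ideal[OF p]) auto
    next
      fix u
      show "(\<Sum>m\<in>{m \<in> ?K - ?P. param_mon p m = u}. ?c m) = 0"
        using z by (rule fibre_sum_eq_0_if_param_z_degree)
    qed simp
  qed
  finally show ?thesis .
qed

section \<open>The initial ideal\<close>

lemma det3_matA_minor2:
  assumes "0 < j" "j < k" "k < p"
  shows "det3 (matA p) 0 (2*j) (2*k) = Var j * Var (p + k) - Var k * Var (p + j)"
  using assms unfolding det3_def matA_def by (simp add: algebra_simps)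

lemma det3_matA_y_mult:
  assumes "0 < j" "j \<le> k" "k < p"
  shows "det3 (matA p) 0 (2*j - 1) (2*k) =
           Var (p + j) * Var (p + k) + (Var j * Var k * Var (2*p) - Var j * Var p * Var (p + k))"
proof -
  have "odd (2*j - 1)" "(2*j - 1 + 1) div 2 = j"
    using assms by simp_all
  then show ?thesis
    using assms unfolding det3_def matA_def by (simp add: algebra_simps)
qed

context
  fixes p :: nat and I :: "'k::comm_ring_1 mpoly set"
  assumes p: "0 < p"
  defines "I \<equiv> ideal_gen {1..2*p} (minors3 (matA p) (2*p - 1))"
begin

lemma I_subset_polys_in: "I \<subseteq> polys_in {1..2*p}"
  unfolding I_def by (rule ideal_subset_polys_in[OF ideal_gen_is_ideal[OF minors3_matA_polys_in[OF p]]])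

lemma det3_matA_mem_I: "a < b \<Longrightarrow> b < c \<Longrightarrow> c < 2*p - 1 \<Longrightarrow> det3 (matA p) a b c \<in> I"
  unfolding I_def minors3_def by (rule subsetD[OF ideal_gen_subset]) blast

lemma initial_ideal_subset_target_ideal: "initial_ideal {1..2*p} I \<subseteq> target_ideal p"
  unfolding initial_ideal_def
proof (rule ideal_gen_least[OF target_ideal_is_ideal], safe)
  fix f assume "f \<in> I"
  then have "init_form f \<in> polys_in {1..2*p}" "param_det p dvd mono_map (param_mon p) f"
    using I_subset_polys_in init_form_polys_in ideal_minors3_subset[OF p] unfolding I_def by blast+
  then show "init_form f \<in> target_ideal p"
    using mem_target_ideal_if_param_z_degree[OF p] param_init_form_z_degree by blast
qed

lemma minors2_subset_initial_ideal: "minors2 (matB p) (p - 1) \<subseteq> initial_ideal {1..2*p} I"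
proof
  fix q :: "'k mpoly"
  assume "q \<in> minors2 (matB p) (p - 1)"
  then obtain a b where ab: "a < b" "b < p - 1"
    and q: "q = Var (a + 1) * Var (p + (b + 1)) - Var (b + 1) * Var (p + (a + 1))"
    unfolding minors2_def matB_def by (auto simp: add.assoc)
  have "det3 (matA p) 0 (2*(a+1)) (2*(b+1)) \<in> I"
    using ab by (intro det3_matA_mem_I) auto
  moreover have "det3 (matA p) 0 (2*(a+1)) (2*(b+1)) = q"
    unfolding q by (rule det3_matA_minor2) (use ab in auto)
  ultimately have "q \<in> I"
    by simp
  moreover have "homogeneous 2 q"
    unfolding q by (intro homogeneous_diff homogeneous_Var_mult_Var)
  ultimately show "q \<in> initial_ideal {1..2*p} I"
    using init_form_mem_initial_ideal init_form_homogeneous by metis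
qed

lemma y_mult_mem_initial_ideal:
  assumes "0 < j" "j \<le> k" "k < p"
  shows "Var (p + j) * Var (p + k) \<in> initial_ideal {1..2*p} I"
proof -
  let ?Q = "Var j * Var k * Var (2*p) - Var j * Var p * Var (p + k) :: 'k mpoly"
  have "homogeneous (2 + 1) ?Q"
    by (intro homogeneous_diff homogeneous_mult homogeneous_Var_mult_Var homogeneous_Var)
  then have "\<forall>m\<in>Poly_Mapping.keys ?Q. 2 < mdeg m"
    by (simp add: homogeneous_def)
  moreover have "Var (p + j) * Var (p + k) \<noteq> (0 :: 'k mpoly)"
    by (simp add: Var_mult single_one_neq_zero)
  ultimately have "init_form (Var (p + j) * Var (p + k) + ?Q) = Var (p + j) * Var (p + k)"
    using init_form_add_higher[OF _ homogeneous_Var_mult_Var] by blast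
  moreover have "det3 (matA p) 0 (2*j - 1) (2*k) \<in> I"
    using assms by (intro det3_matA_mem_I) auto
  then have "Var (p + j) * Var (p + k) + ?Q \<in> I"
    unfolding det3_matA_y_mult[OF assms] .
  ultimately show ?thesis
    by (metis init_form_mem_initial_ideal)
qed

lemma y_y_mem_initial_ideal:
  assumes "i \<in> {p+1..2*p-1}" "i' \<in> {p+1..2*p-1}"
  shows "Var i * Var i' \<in> initial_ideal {1..2*p} I"
proof -
  have "Var (p + j) * Var (p + k) \<in> initial_ideal {1..2*p} I" if "0 < j" "j < p" "0 < k" "k < p" for j k
  proof (cases "j \<le> k")
    case True
    then show ?thesis
      using that y_mult_mem_initial_ideal by simp
  next
    case False
    then show ?thesis
      using that y_mult_mem_initial_ideal[of k j] by (simp add: mult.commute)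
  qed
  moreover have "i = p + (i - p)" "i' = p + (i' - p)" "0 < i - p" "i - p < p" "0 < i' - p" "i' - p < p"
    using assms by auto
  ultimately show ?thesis
    by metis
qed

lemma target_ideal_subset_initial_ideal: "target_ideal p \<subseteq> initial_ideal {1..2*p} I"
proof -
  have initial_ideal: "is_ideal_in {1..2*p} (initial_ideal {1..2*p} I)"
    by (rule initial_ideal_is_ideal[OF I_subset_polys_in])
  have "ideal_gen {1..2*p} (minors2 (matB p) (p - 1)) \<subseteq> initial_ideal {1..2*p} I"
    by (rule ideal_gen_least[OF initial_ideal minors2_subset_initial_ideal])
  moreover have "ideal_mult {1..2*p} (ideal_gen {1..2*p} (Var ` {p+1..2*p-1}))
      (ideal_gen {1..2*p} (Var ` {p+1..2*p-1})) \<subseteq> initial_ideal {1..2*p} I"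
  proof (rule ideal_mult_ideal_gen_subset[OF initial_ideal Var_image_polys_in Var_image_polys_in])
    fix y z :: "'k mpoly"
    assume "y \<in> Var ` {p+1..2*p-1}" "z \<in> Var ` {p+1..2*p-1}"
    then show "y * z \<in> initial_ideal {1..2*p} I"
      using y_y_mem_initial_ideal by blast
  qed simp_all
  ultimately show ?thesis
    unfolding target_ideal_def ideal_sum_def by (intro ideal_gen_least[OF initial_ideal]) blast
qed

end

theorem corollary7p2:
  fixes p :: nat
  assumes "p \<ge> 3"
  defines "V \<equiv> {1..2*p}"
  defines "I \<equiv> ideal_gen V (minors3 (matA p :: nat \<Rightarrow> nat \<Rightarrow> 'k::field mpoly) (2*p - 1))"
  shows "initial_ideal V I =
           ideal_sum V (ideal_gen V (minors2 (matB p :: nat \<Rightarrow> nat \<Rightarrow> 'k mpoly) (p - 1)))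
             (ideal_mult V (ideal_gen V (Var ` {p+1..2*p-1})) (ideal_gen V (Var ` {p+1..2*p-1})))"
proof -
  have "0 < p"
    using assms(1) by simp
  then show ?thesis
    unfolding V_def I_def target_ideal_def[symmetric]
    using initial_ideal_subset_target_ideal target_ideal_subset_initial_ideal by blast
qed

end
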